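(* Let $\{S(t)\}_{t\ge0}$ be a dissipative semigroup on a complete metric space $(X,d)$ and let $\mathcal{B}_0$ be a positively invariant bounded absorbing set. Assume there exist a constant $T>0$, a constant $\eta\in[0,1)$, a function $g:(\mathbb{R}^+)^m\to\mathbb{R}^+$, a function $\phi:X\times X\to\mathbb{R}^+$ and pseudometrics $\varrho_1,\dots,\varrho_m$ on $\mathcal{B}_0$ such that: (i) $g$ is non-decreasing in each variable, $g(0,\dots,0)=0$, and $g$ is continuous at $(0,\dots,0)$; (ii) for every sequence $\{y_n\}\subseteq\mathcal{B}_0$ there is a subsequence $\{y_{n_k}\}$ with $\lim_{k\to\infty}\lim_{l\to\infty}\phi(y_{n_k},y_{n_l})=0$; (iii) each $\varrho_i$ is precompact on $\mathcal{B}_0$, i.e. every sequence in $\mathcal{B}_0$ has a subsequence which is Cauchy with respect to $\varrho_i$; (iv) for all $y_1,y_2\in\mathcal{B}_0$, $$d(S(T)y_1,S(T)y_2)\le\eta\, d(y_1,y_2)+g\big(\varrho_1(y_1,y_2),\dots,\varrho_m(y_1,y_2)\big)+\phi(y_1,y_2).$$ Then $(X,\{S(t)\}_{t\ge0})$ is exponentially decaying with respect to the noncompactness measure, and for every bounded $B\subseteq X$, $$\alpha(S(t)B)\le2\eta^{\frac{t-t_*(B)-T}{T}}\alpha(\mathcal{B}_0)\quad\forall t\ge t_*(B)+T,$$ where $t_*(B)$ satisfies $S(t)B\subseteq\mathcal{B}_0$ for all $t\ge t_*(B)$.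
   Context: A semigroup consists of continuous maps $S(t):X\to X$ with $S(0)=I$, $S(t+s)=S(t)S(s)$; it is dissipative if it has a bounded absorbing set (a closed set $\mathcal{B}$ such that every bounded $B$ satisfies $S(t)B\subseteq\mathcal{B}$ for all large $t$); positively invariant means $S(t)\mathcal{B}_0\subseteq\mathcal{B}_0$ for $t\ge0$. $\alpha$ is the Kuratowski measure of noncompactness, $\alpha(B)=\inf\{\delta>0:B\text{ has a finite cover by sets of diameter}<\delta\}$. The system is exponentially decaying with respect to the noncompactness measure if it is dissipative and there are $t_0>0$ and constants $C,\beta>0$ with $\alpha(S(t)\mathcal{B}_0)\le Ce^{-\beta t}$ for all $t\ge t_0$, for a positively invariant bounded absorbing set $\mathcal{B}_0$. *)

theory Defs
  imports "HOL-Analysis.Analysis"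
begin

definition semigroup :: "(real \<Rightarrow> 'a::metric_space \<Rightarrow> 'a) \<Rightarrow> bool" where
  "semigroup S \<longleftrightarrow>
     (\<forall>t\<ge>0. continuous_on UNIV (S t)) \<and>
     S 0 = id \<and>
     (\<forall>t\<ge>0. \<forall>s\<ge>0. S (t + s) = S t \<circ> S s)"

definition absorbing :: "(real \<Rightarrow> 'a::metric_space \<Rightarrow> 'a) \<Rightarrow> 'a set \<Rightarrow> bool" where
  "absorbing S A \<longleftrightarrow> closed A \<and>
     (\<forall>B. bounded B \<longrightarrow> (\<exists>t0\<ge>0. \<forall>t\<ge>t0. S t ` B \<subseteq> A))"

definition dissipative :: "(real \<Rightarrow> 'a::metric_space \<Rightarrow> 'a) \<Rightarrow> bool" where
  "dissipative S \<longleftrightarrow> semigroup S \<and> (\<exists>A. bounded A \<and> absorbing S A)"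

definition positively_invariant :: "(real \<Rightarrow> 'a \<Rightarrow> 'a) \<Rightarrow> 'a set \<Rightarrow> bool" where
  "positively_invariant S A \<longleftrightarrow> (\<forall>t\<ge>0. S t ` A \<subseteq> A)"

text \<open>Kuratowski measure of noncompactness (meaningful for bounded sets).\<close>
definition kuratowski_alpha :: "'a::metric_space set \<Rightarrow> real" where
  "kuratowski_alpha B = Inf {\<delta>. \<delta> > 0 \<and>
     (\<exists>F. finite F \<and> B \<subseteq> \<Union>F \<and> (\<forall>U\<in>F. bounded U \<and> diameter U < \<delta>))}"

definition exponentially_decaying :: "(real \<Rightarrow> 'a::metric_space \<Rightarrow> 'a) \<Rightarrow> bool" where
  "exponentially_decaying S \<longleftrightarrow> dissipative S \<and>
     (\<exists>B0. positively_invariant S B0 \<and> bounded B0 \<and> absorbing S B0 \<and>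
        (\<exists>t0 C \<beta>. t0 > 0 \<and> C > 0 \<and> \<beta> > 0 \<and>
           (\<forall>t\<ge>t0. kuratowski_alpha (S t ` B0) \<le> C * exp (- \<beta> * t))))"

definition pseudometric_on :: "'a set \<Rightarrow> ('a \<Rightarrow> 'a \<Rightarrow> real) \<Rightarrow> bool" where
  "pseudometric_on A \<rho> \<longleftrightarrow>
     (\<forall>x\<in>A. \<rho> x x = 0) \<and>
     (\<forall>x\<in>A. \<forall>y\<in>A. 0 \<le> \<rho> x y \<and> \<rho> x y = \<rho> y x) \<and>
     (\<forall>x\<in>A. \<forall>y\<in>A. \<forall>z\<in>A. \<rho> x z \<le> \<rho> x y + \<rho> y z)"

definition precompact_pseudometric_on :: "'a set \<Rightarrow> ('a \<Rightarrow> 'a \<Rightarrow> real) \<Rightarrow> bool" where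
  "precompact_pseudometric_on A \<rho> \<longleftrightarrow>
     (\<forall>y. (\<forall>n. y n \<in> A) \<longrightarrow>
        (\<exists>r::nat \<Rightarrow> nat. strict_mono r \<and>
           (\<forall>\<epsilon>>0. \<exists>N. \<forall>p\<ge>N. \<forall>q\<ge>N. \<rho> (y (r p)) (y (r q)) < \<epsilon>)))"

end

theory Submission
  imports Defs
begin

text \<open>
  Write \<open>\<Phi> = S T\<close> and \<open>f = g(\<rho>) + \<phi>\<close>. Iterating (iv) bounds \<open>d(\<Phi>\<^sup>n y\<^sub>1, \<Phi>\<^sup>n y\<^sub>2)\<close>
  by \<open>\<eta>\<^sup>n d(y\<^sub>1, y\<^sub>2)\<close> plus a finite sum of the functions \<open>f(\<Phi>\<^sup>j y\<^sub>1, \<Phi>\<^sup>j y\<^sub>2)\<close>, and this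
  sum is again contractive: \<open>\<phi>\<close> is by (ii), \<open>g(\<rho>)\<close> by (iii) and the continuity of \<open>g\<close> at \<open>0\<close>,
  and contractive functions are closed under sums and composition with maps of \<open>B\<^sub>0\<close> into itself.
  Now cover \<open>B\<^sub>0\<close> by finitely many sets of diameter slightly above \<open>\<alpha>(B\<^sub>0)\<close>. Any sequence in
  \<open>\<Phi>\<^sup>n B\<^sub>0\<close> has a subsequence coming from one of these sets along which the sum is
  small, hence two terms at distance about \<open>\<eta>\<^sup>n \<alpha>(B\<^sub>0)\<close> at most. So \<open>\<Phi>\<^sup>n B\<^sub>0\<close> has no
  infinite separated sequence at that scale, is covered by finitely many balls of that radius, and
  \<open>\<alpha>(\<Phi>\<^sup>n B\<^sub>0) \<le> 2 \<eta>\<^sup>n \<alpha>(B\<^sub>0)\<close>. In continuous time, \<open>S t B = \<Phi>\<^sup>n (S s B)\<close> with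
  \<open>n = \<lfloor>(t - t\<^sub>*) / T\<rfloor>\<close> and \<open>S s B \<subseteq> B\<^sub>0\<close>.
\<close>

lemma kuratowski_alpha_set_nonempty:
  fixes X :: "'a::metric_space set"
  assumes "bounded X"
  shows "{\<delta>. \<delta> > 0 \<and> (\<exists>F. finite F \<and> X \<subseteq> \<Union>F \<and> (\<forall>U\<in>F. bounded U \<and> diameter U < \<delta>))} \<noteq> {}"
proof -
  have "diameter X + 1 \<in> {\<delta>. \<delta> > 0 \<and> (\<exists>F. finite F \<and> X \<subseteq> \<Union>F \<and> (\<forall>U\<in>F. bounded U \<and> diameter U < \<delta>))}"
    using assms diameter_ge_0[OF assms] by (auto intro!: exI[of _ "{X}"])
  then show ?thesis by blast
qed

lemma kuratowski_alpha_nonneg: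
  fixes X :: "'a::metric_space set"
  assumes "bounded X"
  shows "0 \<le> kuratowski_alpha X"
  unfolding kuratowski_alpha_def
  by (rule cInf_greatest[OF kuratowski_alpha_set_nonempty[OF assms]]) auto

lemma kuratowski_alpha_le:
  fixes X :: "'a::metric_space set"
  assumes "0 \<le> c"
    and "\<And>e. e > 0 \<Longrightarrow> \<exists>F. finite F \<and> X \<subseteq> \<Union>F \<and> (\<forall>U\<in>F. bounded U \<and> diameter U < c + e)"
  shows "kuratowski_alpha X \<le> c"
proof (rule field_le_epsilon)
  fix e :: real assume "0 < e"
  with assms have "c + e \<in> {\<delta>. \<delta> > 0 \<and> (\<exists>F. finite F \<and> X \<subseteq> \<Union>F \<and> (\<forall>U\<in>F. bounded U \<and> diameter U < \<delta>))}"
    by auto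
  then show "kuratowski_alpha X \<le> c + e"
    unfolding kuratowski_alpha_def by (rule cInf_lower) (auto intro: bdd_belowI[of _ 0])
qed

lemma kuratowski_alpha_cover:
  fixes X :: "'a::metric_space set"
  assumes "bounded X" "kuratowski_alpha X < d"
  obtains F where "finite F" "X \<subseteq> \<Union>F" "\<forall>U\<in>F. bounded U \<and> diameter U < d"
proof -
  obtain \<delta> F where "\<delta> < d" "finite F" "X \<subseteq> \<Union>F" "\<forall>U\<in>F. bounded U \<and> diameter U < \<delta>"
    using cInf_lessD[OF kuratowski_alpha_set_nonempty[OF assms(1)], of d] assms(2)
    unfolding kuratowski_alpha_def by blast
  then show ?thesis using that by fastforce
qed

lemma kuratowski_alpha_mono:
  fixes X Y :: "'a::metric_space set"
  assumes "X \<subseteq> Y" "bounded Y"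
  shows "kuratowski_alpha X \<le> kuratowski_alpha Y"
proof (rule kuratowski_alpha_le)
  show "0 \<le> kuratowski_alpha Y" using assms(2) by (rule kuratowski_alpha_nonneg)
  fix e :: real assume "0 < e"
  then obtain F where "finite F" "Y \<subseteq> \<Union>F" "\<forall>U\<in>F. bounded U \<and> diameter U < kuratowski_alpha Y + e"
    using kuratowski_alpha_cover[OF assms(2), of "kuratowski_alpha Y + e"] by auto
  then show "\<exists>F. finite F \<and> X \<subseteq> \<Union>F \<and> (\<forall>U\<in>F. bounded U \<and> diameter U < kuratowski_alpha Y + e)"
    using assms(1) by blast
qed

lemma diameter_cball_le:
  fixes x :: "'a::metric_space"
  assumes "0 \<le> r"
  shows "diameter (cball x r) \<le> 2 * r"
proof -
  have "dist y z \<le> 2 * r" if "y \<in> cball x r" "z \<in> cball x r" for y z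
    using that dist_triangle[of y z x] by (simp add: dist_commute)
  then show ?thesis
    using assms unfolding diameter_def by (auto intro!: cSUP_least)
qed

lemma finite_cball_cover_if_close_pairs:
  fixes X :: "'a::metric_space set"
  assumes "\<And>x :: nat \<Rightarrow> 'a. (\<forall>n. x n \<in> X) \<Longrightarrow> \<exists>k l. k < l \<and> dist (x k) (x l) \<le> r"
  obtains P where "finite P" "X \<subseteq> (\<Union>p\<in>P. cball p r)"
proof (rule ccontr)
  assume no_cover: "\<not> thesis"
  have "\<exists>x. \<forall>n::nat. x n \<in> X \<and> (\<forall>m<n. r < dist (x m) (x n))"
  proof (rule dependent_wellorder_choice)
    fix n :: nat and x :: "nat \<Rightarrow> 'a"
    have "\<not> X \<subseteq> (\<Union>p\<in>x ` {..<n}. cball p r)"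
      using no_cover that[of "x ` {..<n}"] by blast
    then show "\<exists>z. z \<in> X \<and> (\<forall>m<n. r < dist (x m) z)" by (auto simp: not_le)
  qed simp
  then obtain x :: "nat \<Rightarrow> 'a" where in_X: "\<forall>n. x n \<in> X" and far: "\<And>m n. m < n \<Longrightarrow> r < dist (x m) (x n)"
    by blast
  obtain k l where "k < l" "dist (x k) (x l) \<le> r"
    using assms[OF in_X] by blast
  with far[of k l] show False by simp
qed

lemma kuratowski_alpha_le_if_close_pairs:
  fixes X :: "'a::metric_space set"
  assumes "0 \<le> r" and "\<And>x :: nat \<Rightarrow> 'a. (\<forall>n. x n \<in> X) \<Longrightarrow> \<exists>k l. k < l \<and> dist (x k) (x l) \<le> r"
  shows "kuratowski_alpha X \<le> 2 * r"
proof -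
  obtain P where "finite P" "X \<subseteq> (\<Union>p\<in>P. cball p r)"
    using finite_cball_cover_if_close_pairs assms(2) by blast
  show ?thesis
  proof (rule kuratowski_alpha_le)
    show "0 \<le> 2 * r" using assms(1) by simp
    fix e :: real assume "0 < e"
    then have "\<forall>U\<in>(\<lambda>p. cball p r) ` P. bounded U \<and> diameter U < 2 * r + e"
      by (fastforce intro: le_less_trans[OF diameter_cball_le[OF assms(1)]])
    with \<open>finite P\<close> \<open>X \<subseteq> (\<Union>p\<in>P. cball p r)\<close>
    show "\<exists>F. finite F \<and> X \<subseteq> \<Union>F \<and> (\<forall>U\<in>F. bounded U \<and> diameter U < 2 * r + e)"
      by (intro exI[of _ "(\<lambda>p. cball p r) ` P"]) auto
  qed
qed

text \<open>
  \<open>iterated_null f y\<close> says \<open>limsup\<^sub>k limsup\<^sub>l f(y\<^sub>k, y\<^sub>l) \<le> 0\<close>. It is implied by the paper's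
  condition \<open>lim\<^sub>k lim\<^sub>l f(y\<^sub>k, y\<^sub>l) = 0\<close> but, unlike it, survives passing to subsequences and
  adding functions, which is all the argument needs. \<open>contractive_on\<close> is then the notion of a
  contractive function of Chueshov and Lasiecka.
\<close>

definition iterated_null :: "('a \<Rightarrow> 'a \<Rightarrow> real) \<Rightarrow> (nat \<Rightarrow> 'a) \<Rightarrow> bool" where
  "iterated_null f y \<longleftrightarrow> (\<forall>e>0. \<exists>K. \<forall>k\<ge>K. \<exists>L. \<forall>l\<ge>L. f (y k) (y l) < e)"

definition contractive_on :: "'a set \<Rightarrow> ('a \<Rightarrow> 'a \<Rightarrow> real) \<Rightarrow> bool" where
  "contractive_on B f \<longleftrightarrow>
     (\<forall>y. (\<forall>n. y n \<in> B) \<longrightarrow> (\<exists>r::nat \<Rightarrow> nat. strict_mono r \<and> iterated_null f (y \<circ> r)))"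

lemma iterated_null_subseq:
  assumes "iterated_null f y" "strict_mono r"
  shows "iterated_null f (y \<circ> r)"
  unfolding iterated_null_def
proof (intro allI impI)
  fix e :: real assume "0 < e"
  then obtain K where K: "\<And>k. k \<ge> K \<Longrightarrow> \<exists>L. \<forall>l\<ge>L. f (y k) (y l) < e"
    using assms(1) unfolding iterated_null_def by blast
  have "\<exists>L. \<forall>l\<ge>L. f (y (r k)) (y (r l)) < e" if "k \<ge> K" for k
  proof -
    have "K \<le> r k" using seq_suble[OF assms(2), of k] that by linarith
    then obtain L where "\<forall>l\<ge>L. f (y (r k)) (y l) < e"
      using K by blast
    then have "\<forall>l\<ge>L. f (y (r k)) (y (r l)) < e"
      using seq_suble[OF assms(2)] order.trans by blast
    then show ?thesis by blast
  qed
  then show "\<exists>K. \<forall>k\<ge>K. \<exists>L. \<forall>l\<ge>L. f ((y \<circ> r) k) ((y \<circ> r) l) < e" by auto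
qed

lemma iterated_null_add:
  assumes "iterated_null f y" "iterated_null h y"
  shows "iterated_null (\<lambda>a b. f a b + h a b) y"
  unfolding iterated_null_def
proof (intro allI impI)
  fix e :: real assume "0 < e"
  then have "0 < e / 2" by simp
  then obtain K1 K2 where
    K1: "\<forall>k\<ge>K1. \<exists>L. \<forall>l\<ge>L. f (y k) (y l) < e / 2" and
    K2: "\<forall>k\<ge>K2. \<exists>L. \<forall>l\<ge>L. h (y k) (y l) < e / 2"
    using assms unfolding iterated_null_def by blast
  have "\<exists>L. \<forall>l\<ge>L. f (y k) (y l) + h (y k) (y l) < e" if "k \<ge> max K1 K2" for k
  proof -
    have "k \<ge> K1" "k \<ge> K2" using that by auto
    then obtain L1 L2 where "\<forall>l\<ge>L1. f (y k) (y l) < e / 2" "\<forall>l\<ge>L2. h (y k) (y l) < e / 2"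
      using K1 K2 by blast
    then have "\<forall>l\<ge>max L1 L2. f (y k) (y l) + h (y k) (y l) < e" by fastforce
    then show ?thesis by blast
  qed
  then show "\<exists>K. \<forall>k\<ge>K. \<exists>L. \<forall>l\<ge>L. f (y k) (y l) + h (y k) (y l) < e" by blast
qed

lemma contractive_on_add:
  assumes "contractive_on B f" "contractive_on B h"
  shows "contractive_on B (\<lambda>a b. f a b + h a b)"
  unfolding contractive_on_def
proof (intro allI impI)
  fix y :: "nat \<Rightarrow> 'a" assume y: "\<forall>n. y n \<in> B"
  then obtain r1 where r1: "strict_mono r1" "iterated_null f (y \<circ> r1)"
    using assms(1) unfolding contractive_on_def by blast
  from y obtain r2 where r2: "strict_mono r2" "iterated_null h (y \<circ> r1 \<circ> r2)"
    using assms(2) unfolding contractive_on_def by (metis comp_apply)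
  have "iterated_null f (y \<circ> r1 \<circ> r2)"
    using iterated_null_subseq[OF r1(2) r2(1)] .
  with r2(2) have "iterated_null (\<lambda>a b. f a b + h a b) (y \<circ> (r1 \<circ> r2))"
    by (simp add: iterated_null_add comp_assoc)
  with strict_mono_o[OF r1(1) r2(1)] show "\<exists>r. strict_mono r \<and> iterated_null (\<lambda>a b. f a b + h a b) (y \<circ> r)"
    by blast
qed

lemma contractive_on_zero: "contractive_on B (\<lambda>a b. 0)"
  unfolding contractive_on_def iterated_null_def using strict_mono_id by blast

lemma contractive_on_sum:
  assumes "finite J" "\<And>j. j \<in> J \<Longrightarrow> contractive_on B (f j)"
  shows "contractive_on B (\<lambda>a b. \<Sum>j\<in>J. f j a b)"
  using assms by (induction J rule: finite_induct) (simp_all add: contractive_on_zero contractive_on_add)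

lemma contractive_on_comp:
  assumes "contractive_on C f" "F ` B \<subseteq> C"
  shows "contractive_on B (\<lambda>a b. f (F a) (F b))"
  unfolding contractive_on_def
proof (intro allI impI)
  fix y :: "nat \<Rightarrow> 'b" assume "\<forall>n. y n \<in> B"
  then have "\<forall>n. (F \<circ> y) n \<in> C" using assms(2) by auto
  then obtain r where "strict_mono r" "iterated_null f (F \<circ> y \<circ> r)"
    using assms(1) unfolding contractive_on_def by blast
  then show "\<exists>r. strict_mono r \<and> iterated_null (\<lambda>a b. f (F a) (F b)) (y \<circ> r)"
    unfolding iterated_null_def by auto
qed

lemma contractive_on_if_iterated_limits:
  assumes "\<And>y. (\<forall>n. y n \<in> B) \<Longrightarrow> \<exists>r::nat \<Rightarrow> nat. strict_mono r \<and>
             (\<exists>L. (\<forall>k. (\<lambda>l. f (y (r k)) (y (r l))) \<longlonglongrightarrow> L k) \<and> L \<longlonglongrightarrow> 0)"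
  shows "contractive_on B f"
  unfolding contractive_on_def
proof (intro allI impI)
  fix y :: "nat \<Rightarrow> 'a" assume "\<forall>n. y n \<in> B"
  then obtain r L where r: "strict_mono r" and
    lim: "\<And>k. (\<lambda>l. f (y (r k)) (y (r l))) \<longlonglongrightarrow> L k" and L: "L \<longlonglongrightarrow> 0"
    using assms by blast
  have "iterated_null f (y \<circ> r)"
    unfolding iterated_null_def
  proof (intro allI impI)
    fix e :: real assume "0 < e"
    then obtain K where "\<forall>k\<ge>K. L k < e"
      using order_tendstoD(2)[OF L] unfolding eventually_sequentially by auto
    then have "\<exists>L. \<forall>l\<ge>L. f (y (r k)) (y (r l)) < e" if "k \<ge> K" for k
      using order_tendstoD(2)[OF lim[of k]] that unfolding eventually_sequentially by auto
    then show "\<exists>K. \<forall>k\<ge>K. \<exists>L. \<forall>l\<ge>L. f ((y \<circ> r) k) ((y \<circ> r) l) < e" by auto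
  qed
  with r show "\<exists>r. strict_mono r \<and> iterated_null f (y \<circ> r)" by blast
qed

lemma contractive_on_if_precompact:
  assumes "precompact_pseudometric_on B \<rho>"
  shows "contractive_on B \<rho>"
  using assms unfolding precompact_pseudometric_on_def contractive_on_def iterated_null_def
  by (metis comp_apply)

lemma contractive_on_modulus:
  assumes "contractive_on B f"
    and "\<And>e. e > 0 \<Longrightarrow> \<exists>d>0. \<forall>a\<in>B. \<forall>b\<in>B. f a b < d \<longrightarrow> h a b < e"
  shows "contractive_on B h"
  unfolding contractive_on_def
proof (intro allI impI)
  fix y :: "nat \<Rightarrow> 'a" assume y: "\<forall>n. y n \<in> B"
  then obtain r where r: "strict_mono r" "iterated_null f (y \<circ> r)"
    using assms(1) unfolding contractive_on_def by blast
  have "iterated_null h (y \<circ> r)"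
    unfolding iterated_null_def
  proof (intro allI impI)
    fix e :: real assume "0 < e"
    then obtain d where "d > 0" and d: "\<forall>a\<in>B. \<forall>b\<in>B. f a b < d \<longrightarrow> h a b < e"
      using assms(2) by blast
    then obtain K where "\<forall>k\<ge>K. \<exists>L. \<forall>l\<ge>L. f (y (r k)) (y (r l)) < d"
      using r(2) unfolding iterated_null_def by auto
    then show "\<exists>K. \<forall>k\<ge>K. \<exists>L. \<forall>l\<ge>L. h ((y \<circ> r) k) ((y \<circ> r) l) < e"
      using d y by (metis comp_apply)
  qed
  with r(1) show "\<exists>r. strict_mono r \<and> iterated_null h (y \<circ> r)" by blast
qed

lemma contractive_on_continuous_comp_pseudometrics:
  fixes g :: "real^'m \<Rightarrow> real" and \<rho> :: "'m \<Rightarrow> 'a \<Rightarrow> 'a \<Rightarrow> real"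
  assumes "\<And>i. precompact_pseudometric_on B (\<rho> i)"
    and "\<And>i a b. a \<in> B \<Longrightarrow> b \<in> B \<Longrightarrow> 0 \<le> \<rho> i a b"
    and "continuous (at 0 within {x. \<forall>i. 0 \<le> x $ i}) g" "g 0 = 0"
  shows "contractive_on B (\<lambda>a b. g (\<chi> i. \<rho> i a b))"
proof (rule contractive_on_modulus)
  show "contractive_on B (\<lambda>a b. \<Sum>i\<in>UNIV. \<rho> i a b)"
    by (rule contractive_on_sum) (simp_all add: contractive_on_if_precompact assms(1))
  fix e :: real assume "0 < e"
  then obtain d where "d > 0" and d: "\<forall>x\<in>{x. \<forall>i. 0 \<le> x $ i}. dist x 0 < d \<longrightarrow> dist (g x) (g 0) < e"
    using assms(3) unfolding continuous_within_eps_delta by blast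
  have "g (\<chi> i. \<rho> i a b) < e" if "a \<in> B" "b \<in> B" "(\<Sum>i\<in>UNIV. \<rho> i a b) < d" for a b
  proof -
    have "norm (\<chi> i. \<rho> i a b) \<le> (\<Sum>i\<in>UNIV. \<bar>\<rho> i a b\<bar>)"
      using norm_le_l1_cart[of "\<chi> i. \<rho> i a b"] by simp
    also have "\<dots> = (\<Sum>i\<in>UNIV. \<rho> i a b)"
      using assms(2) that by simp
    finally have "dist (\<chi> i. \<rho> i a b) 0 < d"
      using that(3) by (simp add: dist_norm)
    then have "dist (g (\<chi> i. \<rho> i a b)) (g 0) < e"
      using d assms(2)[OF that(1,2)] by simp
    with assms(4) show ?thesis by (simp add: dist_real_def)
  qed
  then show "\<exists>d>0. \<forall>a\<in>B. \<forall>b\<in>B. (\<Sum>i\<in>UNIV. \<rho> i a b) < d \<longrightarrow> g (\<chi> i. \<rho> i a b) < e"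
    using \<open>d > 0\<close> by blast
qed

lemma subseq_in_finite_cover:
  fixes y :: "nat \<Rightarrow> 'a"
  assumes "finite F" "\<forall>n. y n \<in> \<Union>F"
  obtains U and r :: "nat \<Rightarrow> nat" where "U \<in> F" "strict_mono r" "\<forall>n. y (r n) \<in> U"
proof -
  have "(UNIV :: nat set) = (\<Union>U\<in>F. {n. y n \<in> U})"
    using assms(2) by auto
  then obtain U where "U \<in> F" "infinite {n. y n \<in> U}"
    using finite_UN[OF assms(1), of "\<lambda>U. {n. y n \<in> U}"] infinite_UNIV_nat by auto
  with infinite_enumerate that show thesis by blast
qed

lemma contractive_on_close_pair:
  fixes y :: "nat \<Rightarrow> 'a::metric_space"
  assumes "contractive_on B f" "finite F" "B \<subseteq> \<Union>F" "\<forall>U\<in>F. bounded U \<and> diameter U < \<delta>"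
    and "\<forall>n. y n \<in> B" "0 < e"
  obtains k l where "k < l" "dist (y k) (y l) < \<delta>" "f (y k) (y l) < e"
proof -
  have "\<forall>n. y n \<in> \<Union>F" using assms(3,5) by blast
  then obtain U and r :: "nat \<Rightarrow> nat" where U: "U \<in> F" and r: "strict_mono r" "\<forall>n. y (r n) \<in> U"
    using subseq_in_finite_cover[OF assms(2)] by blast
  have "\<forall>n. (y \<circ> r) n \<in> B" using assms(5) by simp
  then obtain r' :: "nat \<Rightarrow> nat" where r': "strict_mono r'" "iterated_null f (y \<circ> r \<circ> r')"
    using assms(1) unfolding contractive_on_def by blast
  define s where "s = r \<circ> r'"
  have s: "strict_mono s" "\<And>n. y (s n) \<in> U" "iterated_null f (y \<circ> s)"
    using strict_mono_o[OF r(1) r'(1)] r(2) r'(2) by (simp_all add: s_def o_assoc)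
  obtain K where "\<forall>k\<ge>K. \<exists>L. \<forall>l\<ge>L. f ((y \<circ> s) k) ((y \<circ> s) l) < e"
    using s(3) \<open>0 < e\<close> unfolding iterated_null_def by blast
  then obtain L where L: "\<forall>l\<ge>L. f (y (s K)) (y (s l)) < e" by auto
  define l where "l = max L (Suc K)"
  have "s K < s l" using s(1) by (simp add: l_def strict_mono_less)
  moreover have "f (y (s K)) (y (s l)) < e" using L by (simp add: l_def)
  moreover have "dist (y (s K)) (y (s l)) \<le> diameter U"
    using assms(4) U s(2) by (intro diameter_bounded_bound) auto
  with assms(4) U have "dist (y (s K)) (y (s l)) < \<delta>" by fastforce
  ultimately show thesis using that by blast
qed

lemma kuratowski_alpha_image_le:
  fixes F :: "'a::metric_space \<Rightarrow> 'b::metric_space"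
  assumes "bounded B" "0 \<le> q" "contractive_on B f"
    and "\<And>a b. a \<in> B \<Longrightarrow> b \<in> B \<Longrightarrow> dist (F a) (F b) \<le> q * dist a b + f a b"
  shows "kuratowski_alpha (F ` B) \<le> 2 * q * kuratowski_alpha B"
proof (rule field_le_epsilon)
  fix e :: real assume "0 < e"
  define d where "d = e / (2 * q + 2)"
  have "0 < d" using \<open>0 < e\<close> assms(2) by (simp add: d_def)
  define \<delta> where "\<delta> = kuratowski_alpha B + d"
  obtain C where C: "finite C" "B \<subseteq> \<Union>C" "\<forall>U\<in>C. bounded U \<and> diameter U < \<delta>"
    using kuratowski_alpha_cover[OF assms(1), of \<delta>] \<open>0 < d\<close> unfolding \<delta>_def by auto
  have "kuratowski_alpha (F ` B) \<le> 2 * (q * \<delta> + d)"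
  proof (rule kuratowski_alpha_le_if_close_pairs)
    show "0 \<le> q * \<delta> + d"
      using assms(2) \<open>0 < d\<close> kuratowski_alpha_nonneg[OF assms(1)] by (simp add: \<delta>_def)
    fix x :: "nat \<Rightarrow> 'b" assume "\<forall>n. x n \<in> F ` B"
    then obtain y where y: "\<forall>n. y n \<in> B" "\<forall>n. x n = F (y n)"
      unfolding image_iff by metis
    obtain k l where "k < l" "dist (y k) (y l) < \<delta>" "f (y k) (y l) < d"
      using contractive_on_close_pair[OF assms(3) C y(1) \<open>0 < d\<close>] by blast
    moreover have "dist (x k) (x l) \<le> q * dist (y k) (y l) + f (y k) (y l)"
      using assms(4) y by simp
    moreover have "q * dist (y k) (y l) \<le> q * \<delta>"
      using assms(2) \<open>dist (y k) (y l) < \<delta>\<close> by (simp add: mult_left_mono)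
    ultimately show "\<exists>k l. k < l \<and> dist (x k) (x l) \<le> q * \<delta> + d"
      by fastforce
  qed
  also have "\<dots> = 2 * q * kuratowski_alpha B + d * (2 * q + 2)"
    by (simp add: \<delta>_def algebra_simps)
  also have "d * (2 * q + 2) = e"
    using assms(2) by (simp add: d_def)
  finally show "kuratowski_alpha (F ` B) \<le> 2 * q * kuratowski_alpha B + e" .
qed

lemma funpow_image_subset:
  assumes "\<Phi> ` B \<subseteq> B"
  shows "(\<Phi> ^^ n) ` B \<subseteq> B"
  using assms by (induction n) (auto simp: image_subset_iff)

lemma dist_funpow_le:
  assumes "\<Phi> ` B \<subseteq> B" "0 \<le> \<eta>" "\<eta> \<le> 1"
    and nonneg: "\<And>a b. a \<in> B \<Longrightarrow> b \<in> B \<Longrightarrow> 0 \<le> f a b"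
    and step: "\<And>a b. a \<in> B \<Longrightarrow> b \<in> B \<Longrightarrow> dist (\<Phi> a) (\<Phi> b) \<le> \<eta> * dist a b + f a b"
    and "a \<in> B" "b \<in> B"
  shows "dist ((\<Phi> ^^ n) a) ((\<Phi> ^^ n) b) \<le> \<eta> ^ n * dist a b + (\<Sum>j<n. f ((\<Phi> ^^ j) a) ((\<Phi> ^^ j) b))"
proof (induction n)
  case 0
  then show ?case by simp
next
  case (Suc n)
  let ?a = "(\<Phi> ^^ n) a" and ?b = "(\<Phi> ^^ n) b" and ?s = "\<Sum>j<n. f ((\<Phi> ^^ j) a) ((\<Phi> ^^ j) b)"
  have in_B: "?a \<in> B" "?b \<in> B"
    using funpow_image_subset[OF assms(1), of n] assms(6,7) by auto
  have "0 \<le> ?s"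
    using funpow_image_subset[OF assms(1)] assms(6,7) by (intro sum_nonneg nonneg) auto
  then have "\<eta> * ?s \<le> ?s"
    using assms(2,3) by (simp add: mult_left_le_one_le)
  have "dist ((\<Phi> ^^ Suc n) a) ((\<Phi> ^^ Suc n) b) \<le> \<eta> * dist ?a ?b + f ?a ?b"
    using step[OF in_B] by simp
  also have "\<dots> \<le> \<eta> * (\<eta> ^ n * dist a b + ?s) + f ?a ?b"
    using Suc.IH assms(2) by (simp add: mult_left_mono)
  also have "\<dots> \<le> \<eta> ^ Suc n * dist a b + (?s + f ?a ?b)"
    using \<open>\<eta> * ?s \<le> ?s\<close> by (simp add: algebra_simps)
  finally show ?case by simp
qed

lemma kuratowski_alpha_funpow_image_le:
  assumes "bounded B" "\<Phi> ` B \<subseteq> B" "0 \<le> \<eta>" "\<eta> \<le> 1" "contractive_on B f"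
    and "\<And>a b. a \<in> B \<Longrightarrow> b \<in> B \<Longrightarrow> 0 \<le> f a b"
    and "\<And>a b. a \<in> B \<Longrightarrow> b \<in> B \<Longrightarrow> dist (\<Phi> a) (\<Phi> b) \<le> \<eta> * dist a b + f a b"
  shows "kuratowski_alpha ((\<Phi> ^^ n) ` B) \<le> 2 * \<eta> ^ n * kuratowski_alpha B"
proof (rule kuratowski_alpha_image_le)
  show "contractive_on B (\<lambda>a b. \<Sum>j<n. f ((\<Phi> ^^ j) a) ((\<Phi> ^^ j) b))"
    using contractive_on_comp[OF assms(5) funpow_image_subset[OF assms(2)]]
    by (intro contractive_on_sum) auto
  show "\<And>a b. a \<in> B \<Longrightarrow> b \<in> B \<Longrightarrow> dist ((\<Phi> ^^ n) a) ((\<Phi> ^^ n) b)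
      \<le> \<eta> ^ n * dist a b + (\<Sum>j<n. f ((\<Phi> ^^ j) a) ((\<Phi> ^^ j) b))"
    by (rule dist_funpow_le[OF assms(2,3,4,6,7)])
qed (use assms in auto)

lemma semigroup_funpow:
  assumes "semigroup S" "0 \<le> T"
  shows "S (real n * T) = S T ^^ n"
proof (induction n)
  case 0
  then show ?case using assms(1) by (simp add: semigroup_def)
next
  case (Suc n)
  have "S (real (Suc n) * T) = S (T + real n * T)" by (simp add: algebra_simps)
  also have "\<dots> = S T \<circ> S (real n * T)" using assms by (simp add: semigroup_def)
  finally show ?case using Suc.IH by simp
qed

lemma semigroup_image_subset_funpow_image:
  assumes "semigroup S" "0 < T" "0 \<le> ts" "ts \<le> t" "\<forall>s\<ge>ts. S s ` B \<subseteq> B0"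
  shows "S t ` B \<subseteq> (S T ^^ nat \<lfloor>(t - ts) / T\<rfloor>) ` B0"
proof -
  define n where "n = nat \<lfloor>(t - ts) / T\<rfloor>"
  have "real n * T \<le> t - ts"
    using assms(2,4) by (simp add: n_def pos_le_divide_eq[symmetric])
  then have "ts \<le> t - real n * T" by simp
  then have into_B0: "S (t - real n * T) ` B \<subseteq> B0" using assms(5) by blast
  have "0 \<le> real n * T" "0 \<le> t - real n * T"
    using assms(2,3) \<open>ts \<le> t - real n * T\<close> by simp_all
  have "S t = S (real n * T + (t - real n * T))" by simp
  also have "\<dots> = S (real n * T) \<circ> S (t - real n * T)"
    using assms(1) \<open>0 \<le> real n * T\<close> \<open>0 \<le> t - real n * T\<close> unfolding semigroup_def by blast
  also have "\<dots> = S T ^^ n \<circ> S (t - real n * T)"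
    using semigroup_funpow[OF assms(1)] assms(2) by simp
  finally have "S t = S T ^^ n \<circ> S (t - real n * T)" .
  with into_B0 show ?thesis unfolding n_def by (auto simp: image_comp[symmetric])
qed

lemma power_floor_le_powr:
  fixes \<eta> x :: real
  assumes "0 \<le> \<eta>" "\<eta> \<le> 1" "1 \<le> x"
  shows "\<eta> ^ nat \<lfloor>x\<rfloor> \<le> \<eta> powr (x - 1)"
proof (cases "\<eta> = 0")
  case True
  have "0 < nat \<lfloor>x\<rfloor>" using assms(3) by simp
  then have "\<eta> ^ nat \<lfloor>x\<rfloor> = 0" using True by (simp only: zero_power)
  moreover have "\<eta> powr (x - 1) = 0" using True by simp
  ultimately show ?thesis by linarith
next
  case False
  then have "\<eta> ^ nat \<lfloor>x\<rfloor> = \<eta> powr real (nat \<lfloor>x\<rfloor>)"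
    using assms(1) by (simp add: powr_realpow)
  also have "\<dots> \<le> \<eta> powr (x - 1)"
    using assms by (intro powr_mono') linarith+
  finally show ?thesis .
qed

lemma powr_le_exp_bound:
  fixes \<eta> T A :: real
  assumes "0 \<le> \<eta>" "\<eta> < 1" "0 < T" "0 \<le> A"
  obtains C \<beta> where "0 < C" "0 < \<beta>" "\<And>t. A * \<eta> powr ((t - T) / T) \<le> C * exp (- \<beta> * t)"
proof (cases "\<eta> = 0")
  case True
  then show thesis by (intro that[of 1 1]) auto
next
  case False
  then have "0 < \<eta>" using assms(1) by simp
  define \<beta> where "\<beta> = - ln \<eta> / T"
  have "ln \<eta> < 0" using \<open>0 < \<eta>\<close> assms(2) by simp
  then have "0 < \<beta>" using assms(3) by (simp add: \<beta>_def divide_neg_pos)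
  have "\<eta> powr ((t - T) / T) = exp (- \<beta> * t) / \<eta>" for t
  proof -
    have "(t - T) / T * ln \<eta> = - \<beta> * t - ln \<eta>"
      using assms(3) by (simp add: \<beta>_def field_simps)
    then have "\<eta> powr ((t - T) / T) = exp (- \<beta> * t - ln \<eta>)"
      using False by (simp only: powr_def if_False)
    then show ?thesis
      using \<open>0 < \<eta>\<close> by (simp add: exp_diff)
  qed
  then have "A * \<eta> powr ((t - T) / T) \<le> (A / \<eta> + 1) * exp (- \<beta> * t)" for t
    by (simp add: field_simps)
  moreover have "0 < A / \<eta> + 1" using assms(4) \<open>0 < \<eta>\<close> by (simp add: add_nonneg_pos)
  ultimately show thesis using that \<open>0 < \<beta>\<close> by blast
qed

lemma kuratowski_alpha_semigroup_le:
  assumes "semigroup S" "0 < T" "0 \<le> \<eta>" "\<eta> \<le> 1" "bounded B0" "S T ` B0 \<subseteq> B0"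
    and "contractive_on B0 f" "\<And>a b. a \<in> B0 \<Longrightarrow> b \<in> B0 \<Longrightarrow> 0 \<le> f a b"
    and "\<And>a b. a \<in> B0 \<Longrightarrow> b \<in> B0 \<Longrightarrow> dist (S T a) (S T b) \<le> \<eta> * dist a b + f a b"
    and "0 \<le> ts" "\<forall>s\<ge>ts. S s ` B \<subseteq> B0" "ts + T \<le> t"
  shows "kuratowski_alpha (S t ` B) \<le> 2 * \<eta> powr ((t - ts - T) / T) * kuratowski_alpha B0"
proof -
  let ?n = "nat \<lfloor>(t - ts) / T\<rfloor>"
  have "S t ` B \<subseteq> (S T ^^ ?n) ` B0"
    using semigroup_image_subset_funpow_image[OF assms(1,2,10) _ assms(11)] assms(2,12) by simp
  moreover have "bounded ((S T ^^ ?n) ` B0)"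
    using bounded_subset[OF assms(5) funpow_image_subset[OF assms(6)]] .
  ultimately have "kuratowski_alpha (S t ` B) \<le> kuratowski_alpha ((S T ^^ ?n) ` B0)"
    by (rule kuratowski_alpha_mono)
  also have "\<dots> \<le> 2 * \<eta> ^ ?n * kuratowski_alpha B0"
    using kuratowski_alpha_funpow_image_le[OF assms(5,6,3,4,7,8,9)] .
  also have "\<dots> \<le> 2 * \<eta> powr ((t - ts) / T - 1) * kuratowski_alpha B0"
    using power_floor_le_powr[of \<eta> "(t - ts) / T"] assms(2,3,4,12) kuratowski_alpha_nonneg[OF assms(5)]
    by (intro mult_right_mono) (auto simp: field_simps)
  also have "(t - ts) / T - 1 = (t - ts - T) / T" using assms(2) by (simp add: field_simps)
  finally show ?thesis .
qed

theorem theorem4p7: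
  fixes S :: "real \<Rightarrow> 'a::complete_space \<Rightarrow> 'a"
    and B0 :: "'a set"
    and T \<eta> :: real
    and g :: "real^'m \<Rightarrow> real"
    and \<phi> :: "'a \<Rightarrow> 'a \<Rightarrow> real"
    and \<rho> :: "'m \<Rightarrow> 'a \<Rightarrow> 'a \<Rightarrow> real"
  assumes diss: "dissipative S"
    and inv: "positively_invariant S B0"
    and bdd: "bounded B0"
    and abs: "absorbing S B0"
    and T_pos: "T > 0"
    and eta: "0 \<le> \<eta>" "\<eta> < 1"
    and g_nonneg: "\<forall>x. (\<forall>i. 0 \<le> x $ i) \<longrightarrow> 0 \<le> g x"
    and g_mono: "\<forall>x y. (\<forall>i. 0 \<le> x $ i \<and> x $ i \<le> y $ i) \<longrightarrow> g x \<le> g y"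
    and g_zero: "g 0 = 0"
    and g_cont: "continuous (at 0 within {x. \<forall>i. 0 \<le> x $ i}) g"
    and phi_nonneg: "\<forall>x y. 0 \<le> \<phi> x y"
    and phi_seq: "\<forall>y. (\<forall>n. y n \<in> B0) \<longrightarrow>
        (\<exists>r::nat \<Rightarrow> nat. strict_mono r \<and>
          (\<exists>L. (\<forall>k. (\<lambda>l. \<phi> (y (r k)) (y (r l))) \<longlonglongrightarrow> L k) \<and> L \<longlonglongrightarrow> 0))"
    and rho_pm: "\<forall>i. pseudometric_on B0 (\<rho> i)"
    and rho_pc: "\<forall>i. precompact_pseudometric_on B0 (\<rho> i)"
    and contr: "\<forall>y1\<in>B0. \<forall>y2\<in>B0.
        dist (S T y1) (S T y2) \<le> \<eta> * dist y1 y2 + g (\<chi> i. \<rho> i y1 y2) + \<phi> y1 y2"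
  shows "exponentially_decaying S \<and>
    (\<forall>B ts. bounded B \<and> 0 \<le> ts \<and> (\<forall>t\<ge>ts. S t ` B \<subseteq> B0) \<longrightarrow>
       (\<forall>t\<ge>ts + T. kuratowski_alpha (S t ` B)
           \<le> 2 * \<eta> powr ((t - ts - T) / T) * kuratowski_alpha B0))"
proof -
  have sg: "semigroup S" using diss by (simp add: dissipative_def)
  have B0_inv: "\<forall>s\<ge>0. S s ` B0 \<subseteq> B0" using inv by (simp add: positively_invariant_def)
  have rho_nonneg: "0 \<le> \<rho> i a b" if "a \<in> B0" "b \<in> B0" for i a b
    using rho_pm that by (simp add: pseudometric_on_def)
  define f where "f a b = g (\<chi> i. \<rho> i a b) + \<phi> a b" for a b
  have "contractive_on B0 f"
    unfolding f_def using rho_pc rho_nonneg g_cont g_zero phi_seq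
    by (intro contractive_on_add contractive_on_continuous_comp_pseudometrics
        contractive_on_if_iterated_limits) auto
  moreover have "0 \<le> f a b" if "a \<in> B0" "b \<in> B0" for a b
    using g_nonneg phi_nonneg rho_nonneg[OF that] by (simp add: f_def)
  moreover have "dist (S T a) (S T b) \<le> \<eta> * dist a b + f a b" if "a \<in> B0" "b \<in> B0" for a b
    using contr that by (simp add: f_def add.assoc)
  ultimately have decay: "kuratowski_alpha (S t ` B) \<le> 2 * \<eta> powr ((t - ts - T) / T) * kuratowski_alpha B0"
    if "0 \<le> ts" "\<forall>s\<ge>ts. S s ` B \<subseteq> B0" "ts + T \<le> t" for B ts t
    using kuratowski_alpha_semigroup_le[OF sg T_pos eta(1) _ bdd _ _ _ _ that] B0_inv T_pos eta(2) by simp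
  have "0 \<le> 2 * kuratowski_alpha B0" using kuratowski_alpha_nonneg[OF bdd] by simp
  then obtain C \<beta> where "0 < C" "0 < \<beta>"
    and exp_bound: "\<And>t. 2 * kuratowski_alpha B0 * \<eta> powr ((t - T) / T) \<le> C * exp (- \<beta> * t)"
    using powr_le_exp_bound[OF eta T_pos] by blast
  have "kuratowski_alpha (S t ` B0) \<le> C * exp (- \<beta> * t)" if "T \<le> t" for t
    using decay[of 0 B0 t] B0_inv that exp_bound[of t] by (simp add: mult_ac)
  then have "exponentially_decaying S"
    unfolding exponentially_decaying_def using diss inv bdd abs T_pos \<open>0 < C\<close> \<open>0 < \<beta>\<close> by blast
  then show ?thesis using decay by blast
qed

end
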